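(* Consider a Pólya urn that initially contains $M$ balls, all of different colors. Repeatedly draw a ball uniformly at random from the urn and return it together with another ball of the same color, until there are $N$ balls in the urn ($N\ge M$, $N\ge2$). If two balls are then chosen uniformly at random (without replacement) from the urn, the probability that they have the same color is at most $2/(M+1)$. *)

theory Defs
  imports "HOL-Probability.Probability"
begin

text \<open>An urn state is a list c of ball counts, indexed by colours 0..<length c.
  The individual balls are the pairs (i, j) with i < length c and j < c ! i;
  the colour of ball (i, j) is i.\<close>

definition balls :: "nat list \<Rightarrow> (nat \<times> nat) set" where
  "balls c = {(i, j). i < length c \<and> j < c ! i}"

definition polya_step :: "nat list \<Rightarrow> nat list pmf" where
  "polya_step c = map_pmf (\<lambda>b. c[fst b := c ! fst b + 1]) (pmf_of_set (balls c))"

fun polya_urn :: "nat \<Rightarrow> nat \<Rightarrow> nat list pmf" where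
  "polya_urn M 0 = return_pmf (replicate M 1)"
| "polya_urn M (Suc k) = bind_pmf (polya_urn M k) polya_step"

definition draw_two :: "nat list \<Rightarrow> ((nat \<times> nat) \<times> (nat \<times> nat)) pmf" where
  "draw_two c = pmf_of_set {(b1, b2). b1 \<in> balls c \<and> b2 \<in> balls c \<and> b1 \<noteq> b2}"

definition same_colour_prob :: "nat \<Rightarrow> nat \<Rightarrow> real" where
  "same_colour_prob M N =
     measure_pmf.prob
       (bind_pmf (polya_urn M (N - M)) (\<lambda>c. map_pmf (\<lambda>(b1, b2). fst b1 = fst b2) (draw_two c)))
       {True}"

end

theory Submission
  imports Defs
begin

text \<open>Let \<open>F = same_colour_pairs\<close> be the number of ordered pairs of distinct balls of the
  same colour. Drawing a ball of colour \<open>i\<close> raises \<open>F\<close> by \<open>2 c\<^sub>i\<close>, so with \<open>T\<close> balls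
  one step changes the expectation to \<open>F (T + 2) / T + 2\<close>; by induction the urn with \<open>N\<close> balls has
  \<open>E F = 2 N (N - M) / (M + 1)\<close>. Dividing by the \<open>N (N - 1)\<close> equally likely ordered pairs gives
  the exact probability \<open>2 (N - M) / ((M + 1) (N - 1))\<close>, which is at most \<open>2 / (M + 1)\<close>.\<close>

lemma balls_eq_Sigma: "balls c = Sigma {..<length c} (\<lambda>i. {..<c ! i})"
  unfolding balls_def by auto

lemma finite_balls: "finite (balls c)"
  unfolding balls_eq_Sigma by auto

lemma card_balls: "card (balls c) = sum_list c"
  unfolding balls_eq_Sigma by (simp add: sum_list_sum_nth atLeast0LessThan)

lemma balls_nonempty: "sum_list c > 0 \<Longrightarrow> balls c \<noteq> {}"
  using card_balls[of c] by (metis card.empty less_not_refl)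

lemma sum_balls_colour: "(\<Sum>b\<in>balls c. g (fst b)) = (\<Sum>i<length c. real (c ! i) * g i)"
proof -
  have "(\<Sum>b\<in>balls c. g (fst b)) = (\<Sum>i<length c. \<Sum>j<c ! i. g i)"
    unfolding balls_eq_Sigma by (subst sum.Sigma) (auto simp: case_prod_beta)
  then show ?thesis by simp
qed

lemma expectation_bind_pmf_finite:
  fixes h :: "'b \<Rightarrow> real"
  assumes "finite (set_pmf p)" and "\<And>x. x \<in> set_pmf p \<Longrightarrow> finite (set_pmf (f x))"
  shows "measure_pmf.expectation (p \<bind> f) h
           = measure_pmf.expectation p (\<lambda>x. measure_pmf.expectation (f x) h)"
  using assms
  by (simp add: pmf_expectation_bind[of "set_pmf p"] integral_measure_pmf[of "set_pmf p"])

lemma set_pmf_polya_step: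
  "sum_list c > 0 \<Longrightarrow> set_pmf (polya_step c) = (\<lambda>b. c[fst b := c ! fst b + 1]) ` balls c"
  unfolding polya_step_def by (simp add: finite_balls balls_nonempty)

lemma finite_set_pmf_polya_step: "sum_list c > 0 \<Longrightarrow> finite (set_pmf (polya_step c))"
  by (simp add: set_pmf_polya_step finite_balls)

lemma sum_list_polya_step:
  assumes "sum_list c > 0" and "c' \<in> set_pmf (polya_step c)"
  shows "sum_list c' = sum_list c + 1"
proof -
  obtain b where "b \<in> balls c" and c': "c' = c[fst b := c ! fst b + 1]"
    using assms by (auto simp: set_pmf_polya_step)
  then have "fst b < length c" by (auto simp: balls_def)
  then show ?thesis unfolding c' by (simp add: sum_list_update)
qed

lemma sum_list_polya_urn:
  "M \<ge> 1 \<Longrightarrow> c \<in> set_pmf (polya_urn M k) \<Longrightarrow> sum_list c = M + k"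
proof (induction k arbitrary: c)
  case 0
  then show ?case by (simp add: sum_list_replicate)
next
  case (Suc k)
  then obtain a where "a \<in> set_pmf (polya_urn M k)" and "c \<in> set_pmf (polya_step a)"
    by auto
  with Suc show ?case using sum_list_polya_step[of a c] by simp
qed

lemma finite_set_pmf_polya_urn: "M \<ge> 1 \<Longrightarrow> finite (set_pmf (polya_urn M k))"
proof (induction k)
  case (Suc k)
  have "finite (set_pmf (polya_step a))" if "a \<in> set_pmf (polya_urn M k)" for a
    using that Suc.prems by (intro finite_set_pmf_polya_step) (simp add: sum_list_polya_urn)
  with Suc show ?case by simp
qed simp

definition same_colour_pairs :: "nat list \<Rightarrow> real" where
  "same_colour_pairs c = (\<Sum>i<length c. real (c ! i) * (real (c ! i) - 1))"

lemma same_colour_pairs_add_ball: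
  assumes "i < length c"
  shows "same_colour_pairs (c[i := c ! i + 1]) = same_colour_pairs c + 2 * real (c ! i)"
proof -
  have "same_colour_pairs (c[i := c ! i + 1])
      = (\<Sum>j<length c. real (c ! j) * (real (c ! j) - 1) + (if j = i then 2 * real (c ! i) else 0))"
    unfolding same_colour_pairs_def by (intro sum.cong) (auto simp: nth_list_update algebra_simps)
  then show ?thesis
    using assms by (simp add: sum.distrib same_colour_pairs_def)
qed

lemma sum_squares_eq_same_colour_pairs:
  "(\<Sum>i<length c. real (c ! i) * real (c ! i)) = same_colour_pairs c + real (sum_list c)"
  unfolding same_colour_pairs_def
  by (simp add: sum_list_sum_nth atLeast0LessThan sum.distrib[symmetric] algebra_simps)

lemma expectation_polya_step_same_colour_pairs:
  assumes "sum_list c > 0"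
  shows "measure_pmf.expectation (polya_step c) same_colour_pairs
           = same_colour_pairs c * (real (sum_list c) + 2) / real (sum_list c) + 2"
proof -
  let ?T = "real (sum_list c)"
  have "measure_pmf.expectation (polya_step c) same_colour_pairs
      = (\<Sum>b\<in>balls c. same_colour_pairs (c[fst b := c ! fst b + 1])) / ?T"
    unfolding polya_step_def using assms
    by (simp add: integral_pmf_of_set card_balls finite_balls balls_nonempty)
  also have "(\<Sum>b\<in>balls c. same_colour_pairs (c[fst b := c ! fst b + 1]))
           = (\<Sum>b\<in>balls c. same_colour_pairs c + 2 * real (c ! fst b))"
    by (intro sum.cong refl) (auto simp: balls_def same_colour_pairs_add_ball[simplified])
  also have "\<dots> = (\<Sum>i<length c. real (c ! i) * (same_colour_pairs c + 2 * real (c ! i)))"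
    by (rule sum_balls_colour)
  also have "\<dots> = ?T * same_colour_pairs c + 2 * (\<Sum>i<length c. real (c ! i) * real (c ! i))"
    by (simp add: algebra_simps sum.distrib sum_distrib_left sum_distrib_right
                  sum_list_sum_nth atLeast0LessThan)
  also have "\<dots> = ?T * same_colour_pairs c + 2 * (same_colour_pairs c + ?T)"
    by (simp add: sum_squares_eq_same_colour_pairs)
  also have "\<dots> / ?T = same_colour_pairs c * (?T + 2) / ?T + 2"
  proof -
    have "?T \<noteq> 0" using assms by (metis of_nat_0_less_iff less_irrefl)
    then show ?thesis by (simp add: field_simps)
  qed
  finally show ?thesis .
qed

lemma expectation_polya_urn_same_colour_pairs:
  assumes "M \<ge> 1"
  shows "measure_pmf.expectation (polya_urn M k) same_colour_pairs
           = 2 * real (M + k) * (real (M + k) - real M) / (real M + 1)"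
proof (induction k)
  case 0
  then show ?case by (simp add: same_colour_pairs_def)
next
  case (Suc k)
  let ?p = "polya_urn M k" and ?T = "real (M + k)"
  have support: "sum_list a = M + k" if "a \<in> set_pmf ?p" for a
    using assms that by (rule sum_list_polya_urn)
  have integrable: "integrable (measure_pmf ?p) f" for f :: "nat list \<Rightarrow> real"
    using assms by (intro integrable_measure_pmf_finite finite_set_pmf_polya_urn)
  have "measure_pmf.expectation (polya_urn M (Suc k)) same_colour_pairs
      = measure_pmf.expectation ?p (\<lambda>a. measure_pmf.expectation (polya_step a) same_colour_pairs)"
    using assms support
    by (simp add: expectation_bind_pmf_finite finite_set_pmf_polya_urn finite_set_pmf_polya_step)
  also have "\<dots> = measure_pmf.expectation ?p (\<lambda>a. (?T + 2) / ?T * same_colour_pairs a + 2)"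
    using assms support
    by (intro integral_cong_AE) (auto simp: AE_measure_pmf_iff expectation_polya_step_same_colour_pairs)
  also have "\<dots> = (?T + 2) / ?T * measure_pmf.expectation ?p same_colour_pairs + 2"
    using integrable by simp
  also have "\<dots> = 2 * (?T + 1) * (?T + 1 - real M) / (real M + 1)"
  proof -
    have "?T \<noteq> 0" "real M + 1 \<noteq> 0" using assms by auto
    then show ?thesis unfolding Suc by (simp add: divide_simps) algebra
  qed
  finally show ?case by (simp add: algebra_simps)
qed

lemma card_same_colour_other_balls:
  assumes "b \<in> balls c"
  shows "card {b' \<in> balls c. b' \<noteq> b \<and> fst b' = fst b} = c ! fst b - 1"
proof -
  obtain i j where b: "b = (i, j)" and "i < length c" "j < c ! i"
    using assms by (auto simp: balls_def)
  then have "{b' \<in> balls c. b' \<noteq> b \<and> fst b' = fst b} = Pair i ` ({..<c ! i} - {j})"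
    by (auto simp: balls_def)
  then show ?thesis
    using \<open>j < c ! i\<close> b by (simp add: card_image inj_on_def)
qed

lemma prob_draw_two_same_colour:
  assumes "sum_list c \<ge> 2"
  shows "measure_pmf.prob (map_pmf (\<lambda>(b1, b2). fst b1 = fst b2) (draw_two c)) {True}
           = same_colour_pairs c / (real (sum_list c) * (real (sum_list c) - 1))"
proof -
  let ?B = "balls c" and ?same = "\<lambda>(b1, b2). fst b1 = fst (b2 :: nat \<times> nat)"
  let ?S = "{(b1, b2). b1 \<in> ?B \<and> b2 \<in> ?B \<and> b1 \<noteq> b2}"
  have S: "?S = Sigma ?B (\<lambda>b. ?B - {b})" by auto
  have "card ?S = (\<Sum>b\<in>?B. sum_list c - 1)"
    unfolding S by (simp add: card_SigmaI finite_balls card_balls)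
  then have card_S: "real (card ?S) = real (sum_list c) * (real (sum_list c) - 1)"
    using assms by (simp add: card_balls of_nat_diff)
  have "real (card ?S) > 0"
    unfolding card_S using assms by simp
  then have nonempty: "?S \<noteq> {}"
    by (metis card.empty of_nat_0 less_irrefl)
  have finite: "finite ?S"
    unfolding S by (simp add: finite_balls)
  have "?S \<inter> ?same -` {True} = Sigma ?B (\<lambda>b. {b' \<in> ?B. b' \<noteq> b \<and> fst b' = fst b})"
    by (rule set_eqI) (auto simp: case_prod_beta)
  then have "real (card (?S \<inter> ?same -` {True})) = (\<Sum>b\<in>?B. real (c ! fst b - 1))"
    by (simp add: card_SigmaI finite_balls card_same_colour_other_balls)
  also have "\<dots> = (\<Sum>i<length c. real (c ! i) * real (c ! i - 1))"
    by (rule sum_balls_colour)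
  also have "\<dots> = same_colour_pairs c"
    unfolding same_colour_pairs_def by (intro sum.cong refl) (auto simp: of_nat_diff)
  finally show ?thesis
    unfolding draw_two_def using card_S nonempty finite by (simp add: measure_pmf_of_set)
qed

lemma same_colour_prob_eq:
  assumes "M \<ge> 1" and "N \<ge> M" and "N \<ge> 2"
  shows "same_colour_prob M N = 2 * (real N - real M) / ((real M + 1) * (real N - 1))"
proof -
  let ?p = "polya_urn M (N - M)"
  let ?q = "\<lambda>c. map_pmf (\<lambda>(b1, b2). fst b1 = fst b2) (draw_two c)"
  have support: "sum_list c = N" if "c \<in> set_pmf ?p" for c
    using sum_list_polya_urn[OF assms(1) that] assms(2) by simp
  have "same_colour_prob M N = measure_pmf.expectation (?p \<bind> ?q) (indicator {True})"
    unfolding same_colour_prob_def by simp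
  also have "\<dots> = measure_pmf.expectation ?p (\<lambda>c. measure_pmf.prob (?q c) {True})"
    using assms by (subst expectation_bind_pmf_finite) (simp_all add: finite_set_pmf_polya_urn)
  also have "\<dots> = measure_pmf.expectation ?p (\<lambda>c. same_colour_pairs c / (real N * (real N - 1)))"
    using assms support prob_draw_two_same_colour
    by (intro integral_cong_AE) (simp_all add: AE_measure_pmf_iff)
  also have "\<dots> = 2 * real N * (real N - real M) / (real M + 1) / (real N * (real N - 1))"
    using assms by (simp add: expectation_polya_urn_same_colour_pairs)
  also have "\<dots> = 2 * (real N - real M) / ((real M + 1) * (real N - 1))"
    using assms by (simp add: divide_simps)
  finally show ?thesis .
qed

theorem lemma5p1:
  fixes M N :: nat
  assumes "N \<ge> M" and "N \<ge> 2"
  shows "same_colour_prob M N \<le> 2 / (real M + 1)"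
proof (cases "M = 0")
  case True
  have "same_colour_prob M N \<le> 1"
    unfolding same_colour_prob_def by simp
  with True show ?thesis by simp
next
  case False
  then show ?thesis
    using assms by (simp add: same_colour_prob_eq divide_simps)
qed

end
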